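(* Let $\phi:[0,1]\to[0,1]$ be a nondecreasing continuous function such that $\phi(x)>x$ for all $x\in(0,1)$, and let $q,w\in L_2[0,1]$. Let $V_{\phi,q,w}$ be the operator on $L_2[0,1]$ given by $(V_{\phi,q,w}f)(x)=q(x)\int_0^{\phi(x)}f(t)w(t)\,dt$. Then its Fredholm determinant is $$D_{V_{\phi,q,w}}(\lambda)=1+\sum_{n=1}^\infty(-1)^n\lambda^n\int_0^1\int_{\phi(t_1)}^1\cdots\int_{\phi(t_{n-1})}^1 q(t_1)w(t_1)\cdots q(t_n)w(t_n)\,dt_n\cdots dt_1 .$$
   Context: $V_{\phi,q,w}$ is the integral operator with kernel $k(x,t)=q(x)w(t)$ if $t\le\phi(x)$ and $k(x,t)=0$ otherwise. For an integral operator $K$ with kernel $k(x,t)$, the Fredholm determinant is $D_K(\lambda)=\sum_{n=0}^\infty\frac{(-1)^n}{n!}A_n\lambda^n$ with $A_0=1$ and $A_n=\int_{[0,1]^n}\det\big(k(t_i,t_j)\big)_{i,j=1}^n\,dt_1\cdots dt_n$. *)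

theory Defs
  imports "HOL-Analysis.Analysis"
begin

definition V_kernel :: "(real \<Rightarrow> real) \<Rightarrow> (real \<Rightarrow> complex) \<Rightarrow> (real \<Rightarrow> complex) \<Rightarrow> real \<Rightarrow> real \<Rightarrow> complex" where
  "V_kernel \<phi> q w x t = (if t \<le> \<phi> x then q x * w t else 0)"

definition det_n :: "nat \<Rightarrow> (nat \<Rightarrow> nat \<Rightarrow> complex) \<Rightarrow> complex" where
  "det_n n M = (\<Sum>p | p permutes {..<n}. of_int (sign p) * (\<Prod>i<n. M i (p i)))"

definition fredholm_coeff :: "(real \<Rightarrow> real \<Rightarrow> complex) \<Rightarrow> nat \<Rightarrow> complex" where
  "fredholm_coeff k n =
     integral\<^sup>L (Pi\<^sub>M {..<n} (\<lambda>_. lebesgue_on {0..1})) (\<lambda>t. det_n n (\<lambda>i j. k (t i) (t j)))"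

definition fredholm_det :: "(real \<Rightarrow> real \<Rightarrow> complex) \<Rightarrow> complex \<Rightarrow> complex" where
  "fredholm_det k z = (\<Sum>n. (-1) ^ n / of_nat (fact n) * fredholm_coeff k n * z ^ n)"

text \<open>Iterated integral: J 0 s = 1,
  J (n+1) s = int_s^1 q(t) w(t) J n (phi t) dt.
  Thus J n 0 = int_0^1 int_{phi t_1}^1 ... int_{phi t_{n-1}}^1 q(t_1)w(t_1)...q(t_n)w(t_n).\<close>
fun iter_int :: "(real \<Rightarrow> real) \<Rightarrow> (real \<Rightarrow> complex) \<Rightarrow> (real \<Rightarrow> complex) \<Rightarrow> nat \<Rightarrow> real \<Rightarrow> complex" where
  "iter_int \<phi> q w 0 s = 1"
| "iter_int \<phi> q w (Suc n) s =
     (LINT t:{s..1}|lebesgue. q t * w t * iter_int \<phi> q w n (\<phi> t))"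

end

theory Submission
  imports Defs "HOL-Probability.Infinite_Product_Measure" "Jordan_Normal_Form.Determinant"
begin

text \<open>The kernel matrix is \<open>(q t\<^sub>i \<cdot> [t\<^sub>j \<le> \<phi> t\<^sub>i] \<cdot> w t\<^sub>j)\<close>, so its determinant is
  \<open>\<Prod> q t\<^sub>i w t\<^sub>i\<close> times the determinant of the 0/1 comparison matrix. Since \<open>x \<le> \<phi> x\<close>, that
  determinant is 1 if the points, sorted decreasingly, form a \<open>\<phi>\<close>-chain
  \<open>t\<^sub>\<sigma>\<^sub>0 > \<phi> t\<^sub>\<sigma>\<^sub>1, t\<^sub>\<sigma>\<^sub>1 > \<phi> t\<^sub>\<sigma>\<^sub>2, \<dots>\<close>, and 0 otherwise. So the integrand of \<open>A\<^sub>n\<close> is the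
  symmetrisation of the chain weight \<open>\<Prod> q t\<^sub>i w t\<^sub>i \<cdot> [chain]\<close>; as the product measure is
  invariant under permuting coordinates, \<open>A\<^sub>n\<close> is \<open>n!\<close> times the integral of the chain weight,
  which Fubini unwinds into the iterated integral. The same computation gives
  \<open>|A\<^sub>n| \<le> \<parallel>q w\<parallel>\<^sub>1\<^sup>n\<close>, so the series converges for every \<open>\<lambda>\<close>.\<close>

section \<open>Determinants of matrices given by functions\<close>

lemma det_n_eq_det_mat: "det_n n M = Determinant.det (mat n n (\<lambda>(i, j). M i j))"
proof -
  have "Determinant.det (mat n n (\<lambda>(i, j). M i j)) =
      (\<Sum>p | p permutes {0..<n}. of_int (sign p) * (\<Prod>i = 0..<n. mat n n (\<lambda>(i, j). M i j) $$ (i, p i)))"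
    by (rule det_def') simp
  also have "\<dots> = det_n n M"
    unfolding det_n_def lessThan_atLeast0
  proof (rule sum.cong[OF refl])
    fix p assume "p \<in> {p. p permutes {0..<n}}"
    then have "(\<Prod>i = 0..<n. mat n n (\<lambda>(i, j). M i j) $$ (i, p i)) = (\<Prod>i = 0..<n. M i (p i))"
      by (intro prod.cong refl) (auto dest: permutes_in_image)
    then show "of_int (sign p) * (\<Prod>i = 0..<n. mat n n (\<lambda>(i, j). M i j) $$ (i, p i)) =
        of_int (sign p) * (\<Prod>i = 0..<n. M i (p i))"
      by simp
  qed
  finally show ?thesis ..
qed

lemma det_n_scale_rows_cols:
  "det_n n (\<lambda>i j. a i * M i j * b j) = (\<Prod>i<n. a i * b i) * det_n n M"
proof -
  have "(\<Prod>i<n. a i * M i (p i) * b (p i)) = (\<Prod>i<n. a i * b i) * (\<Prod>i<n. M i (p i))"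
    if p: "p permutes {..<n}" for p
  proof -
    have "(\<Prod>i<n. b (p i)) = (\<Prod>i<n. b i)"
      using prod.permute[OF p, of b] by (simp add: comp_def)
    then show ?thesis
      by (simp add: prod.distrib mult_ac)
  qed
  then show ?thesis
    unfolding det_n_def by (simp add: sum_distrib_left mult_ac)
qed

lemma det_n_permute:
  assumes \<pi>: "\<pi> permutes {..<n}"
  shows "det_n n (\<lambda>i j. M (\<pi> i) (\<pi> j)) = det_n n M"
proof -
  let ?S = "{p. p permutes {..<n}}"
  let ?f = "\<lambda>p. of_int (sign p) * (\<Prod>i<n. M (\<pi> i) (\<pi> (p i)))"
  define \<pi>' where "\<pi>' = inv_into UNIV \<pi>"
  have \<pi>': "\<pi>' permutes {..<n}"
    unfolding \<pi>'_def using \<pi> by (rule permutes_inv)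
  have "det_n n (\<lambda>i j. M (\<pi> i) (\<pi> j)) = sum (\<lambda>p. ?f (\<pi>' \<circ> p \<circ> \<pi>)) ?S"
    unfolding det_n_def
    using setum_permutations_compose_left[OF \<pi>', of ?f]
      sum_permutations_compose_right[OF \<pi>, of "\<lambda>p. ?f (\<pi>' \<circ> p)"]
    by (simp add: comp_assoc)
  also have "\<dots> = det_n n M"
    unfolding det_n_def
  proof (rule sum.cong[OF refl])
    fix p assume "p \<in> ?S"
    then have p: "p permutes {..<n}" by simp
    have perm: "permutation p" "permutation \<pi>" "permutation \<pi>'"
      using p \<pi> \<pi>' by (auto intro: permutes_imp_permutation)
    then have "sign (\<pi>' \<circ> p \<circ> \<pi>) = sign \<pi>' * sign p * sign \<pi>"
      by (simp add: sign_compose permutation_compose)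
    then have "sign (\<pi>' \<circ> p \<circ> \<pi>) = sign p"
      using perm by (simp add: sign_inverse \<pi>'_def)
    moreover have "(\<Prod>i<n. M (\<pi> i) (\<pi> ((\<pi>' \<circ> p \<circ> \<pi>) i))) = (\<Prod>i<n. M i (p i))"
      using prod.permute[OF \<pi>, of "\<lambda>i. M i (p i)"] permutes_inverses(1)[OF \<pi>]
      by (simp add: comp_def \<pi>'_def)
    ultimately show "?f (\<pi>' \<circ> p \<circ> \<pi>) = of_int (sign p) * (\<Prod>i<n. M i (p i))"
      by simp
  qed
  finally show ?thesis .
qed

lemma det_n_lower_triangular:
  assumes "\<And>i j. i < j \<Longrightarrow> j < n \<Longrightarrow> M i j = 0"
  shows "det_n n M = (\<Prod>i<n. M i i)"
  using det_lower_triangular[of n "mat n n (\<lambda>(i, j). M i j)"] assms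
  by (simp add: det_n_eq_det_mat prod_list_diag_prod atLeast0LessThan)

lemma det_n_subtract_next_row:
  "det_n n (\<lambda>i j. M i j - (if Suc i < n then M (Suc i) j else 0)) = det_n n M"
proof -
  define A where "A = mat n n (\<lambda>(i, j). M i j)"
  define L where "L = mat n n (\<lambda>(i, j). of_bool (j = i) - of_bool (j = Suc i) :: complex)"
  have A: "A \<in> carrier_mat n n" and L: "L \<in> carrier_mat n n"
    unfolding A_def L_def by auto
  have "upper_triangular L"
    unfolding L_def upper_triangular_def by auto
  then have det_L: "Determinant.det L = 1"
    using det_upper_triangular[OF _ L] by (simp add: prod_list_diag_prod L_def)
  have "mat n n (\<lambda>(i, j). M i j - (if Suc i < n then M (Suc i) j else 0)) = L * A"
  proof (rule eq_matI)
    fix i j assume ij: "i < dim_row (L * A)" "j < dim_col (L * A)"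
    then have "(L * A) $$ (i, j) = (\<Sum>k = 0..<n. (of_bool (k = i) - of_bool (k = Suc i)) * M k j)"
      using L A by (simp add: L_def A_def scalar_prod_def)
    also have "\<dots> = (\<Sum>k = 0..<n. if k = i then M k j else 0) - (\<Sum>k = 0..<n. if k = Suc i then M k j else 0)"
      by (simp add: left_diff_distrib sum_subtractf)
    finally show "mat n n (\<lambda>(i, j). M i j - (if Suc i < n then M (Suc i) j else 0)) $$ (i, j) = (L * A) $$ (i, j)"
      using ij L A by simp
  qed (use L A in auto)
  then show ?thesis
    unfolding det_n_eq_det_mat using det_mult[OF L A] det_L by (simp add: A_def)
qed

section \<open>Chains and the comparison matrix\<close>

text \<open>Indices run downwards: \<open>u 0\<close> is the largest point of a chain.\<close>

definition phi_chain :: "(real \<Rightarrow> real) \<Rightarrow> nat \<Rightarrow> (nat \<Rightarrow> real) \<Rightarrow> bool" where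
  "phi_chain \<phi> n u \<longleftrightarrow> (\<forall>k. Suc k < n \<longrightarrow> \<phi> (u (Suc k)) < u k)"

definition comparison_matrix :: "(real \<Rightarrow> real) \<Rightarrow> (nat \<Rightarrow> real) \<Rightarrow> nat \<Rightarrow> nat \<Rightarrow> complex" where
  "comparison_matrix \<phi> t i j = of_bool (t j \<le> \<phi> (t i))"

lemma V_kernel_eq_comparison_matrix:
  "V_kernel \<phi> q w (t i) (t j) = q (t i) * comparison_matrix \<phi> t i j * w (t j)"
  by (simp add: V_kernel_def comparison_matrix_def)

lemma phi_chain_Suc:
  "phi_chain \<phi> (Suc n) u \<longleftrightarrow> phi_chain \<phi> n u \<and> (n = 0 \<or> \<phi> (u n) < u (n - 1))"
  unfolding phi_chain_def by (cases n) (auto simp: less_Suc_eq)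

lemma of_bool_phi_chain_eq_prod:
  "of_bool (phi_chain \<phi> n u) = (\<Prod>k<n. of_bool (Suc k < n \<longrightarrow> \<phi> (u (Suc k)) < u k) :: 'a::comm_semiring_1)"
proof (cases "phi_chain \<phi> n u")
  case False
  then obtain k where "Suc k < n" "\<not> \<phi> (u (Suc k)) < u k"
    by (auto simp: phi_chain_def)
  then show ?thesis
    using False by (auto intro!: prod_zero bexI[of _ k])
qed (auto simp: phi_chain_def intro!: prod.neutral)

lemma phi_chain_imp_strict_antimono:
  assumes ge: "\<And>i. i < n \<Longrightarrow> u i \<le> \<phi> (u i)" and chain: "phi_chain \<phi> n u"
  shows "strict_antimono_on {..<n} u"
proof (rule monotone_onI)
  fix i j assume "i \<in> {..<n}" "j \<in> {..<n}" "i < j"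
  then show "u j < u i"
  proof (induction j)
    case (Suc j)
    have "u (Suc j) < u j"
      using chain ge[of "Suc j"] Suc.prems unfolding phi_chain_def by force
    then show ?case
      using Suc by (cases "i = j") auto
  qed simp
qed

text \<open>Subtracting from each row the next one turns the comparison matrix of decreasing points
  into a lower triangular matrix: since \<open>u i \<le> \<phi> (u i)\<close>, rows \<open>i\<close> and \<open>i + 1\<close> agree beyond
  the diagonal, and the diagonal entry records whether \<open>\<phi> (u (i + 1)) < u i\<close>.\<close>

lemma det_comparison_matrix_decreasing:
  assumes dec: "strict_antimono_on {..<n} u"
    and ge: "\<And>i. i < n \<Longrightarrow> u i \<le> \<phi> (u i)"
  shows "det_n n (comparison_matrix \<phi> u) = of_bool (phi_chain \<phi> n u)"
proof -
  define D where "D i j = comparison_matrix \<phi> u i j -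
      (if Suc i < n then comparison_matrix \<phi> u (Suc i) j else 0)" for i j
  have lower: "D i j = 0" if "i < j" "j < n" for i j
  proof -
    have "u j < u i"
      using dec that by (auto simp: monotone_on_def)
    then have "u j \<le> \<phi> (u i)"
      using ge[of i] that by simp
    moreover have "u j \<le> \<phi> (u (Suc i))"
    proof (cases "Suc i = j")
      case False
      then have "u j < u (Suc i)"
        using dec that by (auto simp: monotone_on_def)
      then show ?thesis
        using ge[of "Suc i"] that by simp
    qed (use ge that in auto)
    ultimately show ?thesis
      using that by (simp add: D_def comparison_matrix_def)
  qed
  have diag: "D i i = of_bool (Suc i < n \<longrightarrow> \<phi> (u (Suc i)) < u i)" if "i < n" for i
    using ge[OF that] by (auto simp: D_def comparison_matrix_def)
  have "det_n n (comparison_matrix \<phi> u) = det_n n D"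
    unfolding D_def by (rule det_n_subtract_next_row[symmetric])
  also have "\<dots> = (\<Prod>i<n. D i i)"
    using lower by (rule det_n_lower_triangular)
  also have "\<dots> = of_bool (phi_chain \<phi> n u)"
    by (simp add: diag of_bool_phi_chain_eq_prod)
  finally show ?thesis .
qed

definition rank_among :: "(nat \<Rightarrow> real) \<Rightarrow> nat \<Rightarrow> nat \<Rightarrow> nat" where
  "rank_among t n i = card {j \<in> {..<n}. t i < t j}"

lemma rank_among_less:
  assumes "i < n"
  shows "rank_among t n i < n"
proof -
  have "{j \<in> {..<n}. t i < t j} \<subseteq> {..<n} - {i}"
    by auto
  then have "rank_among t n i \<le> card ({..<n} - {i})"
    unfolding rank_among_def by (intro card_mono) auto
  then show ?thesis
    using assms by auto
qed

lemma rank_among_antimono: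
  assumes "i < n" "j < n" "t i < t j"
  shows "rank_among t n j < rank_among t n i"
proof -
  have "{k \<in> {..<n}. t j < t k} \<subset> {k \<in> {..<n}. t i < t k}"
    using assms by auto
  then show ?thesis
    unfolding rank_among_def by (intro psubset_card_mono) auto
qed

lemma inj_on_rank_among:
  assumes "inj_on t {..<n}"
  shows "inj_on (rank_among t n) {..<n}"
proof (rule inj_onI)
  fix i j assume i: "i \<in> {..<n}" and j: "j \<in> {..<n}" and eq: "rank_among t n i = rank_among t n j"
  show "i = j"
  proof (rule ccontr)
    assume "i \<noteq> j"
    then have "t i \<noteq> t j"
      using assms i j by (auto dest: inj_onD)
    then have "t i < t j \<or> t j < t i"
      by linarith
    then show False
      using rank_among_antimono[of i n j t] rank_among_antimono[of j n i t] i j eq by auto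
  qed
qed

lemma rank_among_sorted:
  assumes \<sigma>: "\<sigma> permutes {..<n}" and dec: "strict_antimono_on {..<n} (t \<circ> \<sigma>)" and k: "k < n"
  shows "rank_among t n (\<sigma> k) = k"
proof -
  have "t (\<sigma> k) < t (\<sigma> m) \<longleftrightarrow> m < k" if "m < n" for m
  proof (cases m k rule: linorder_cases)
    case greater
    then have "t (\<sigma> m) < t (\<sigma> k)"
      using dec k that by (auto simp: monotone_on_def)
    then show ?thesis
      using greater by auto
  qed (use dec k that in \<open>auto simp: monotone_on_def\<close>)
  then have "{m \<in> {..<n}. t (\<sigma> k) < t (\<sigma> m)} = {..<k}"
    using k by auto
  moreover have "{j \<in> {..<n}. t (\<sigma> k) < t j} = \<sigma> ` {m \<in> {..<n}. t (\<sigma> k) < t (\<sigma> m)}"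
  proof -
    have "{..<n} = \<sigma> ` {..<n}"
      using permutes_image[OF \<sigma>] by simp
    then show ?thesis
      by auto
  qed
  ultimately have "{j \<in> {..<n}. t (\<sigma> k) < t j} = \<sigma> ` {..<k}"
    by simp
  moreover have "inj_on \<sigma> {..<k}"
    using permutes_inj[OF \<sigma>] by (auto intro: inj_on_subset)
  ultimately show ?thesis
    unfolding rank_among_def by (simp add: card_image)
qed

text \<open>Sorting by rank: the permutation listing the points in decreasing order is the inverse of
  their rank.\<close>

lemma sorting_permutation_exists:
  fixes t :: "nat \<Rightarrow> real"
  assumes inj: "inj_on t {..<n}"
  obtains \<pi> where "\<pi> permutes {..<n}" "strict_antimono_on {..<n} (t \<circ> \<pi>)"
proof -
  define \<rho> where "\<rho> i = (if i < n then rank_among t n i else i)" for i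
  have "inj_on \<rho> {..<n}"
    using inj_on_rank_among[OF inj] unfolding \<rho>_def inj_on_def by auto
  moreover have "\<rho> ` {..<n} \<subseteq> {..<n}"
    using rank_among_less unfolding \<rho>_def by auto
  ultimately have "bij_betw \<rho> {..<n} {..<n}"
    by (simp add: bij_betw_def endo_inj_surj)
  then have \<rho>: "\<rho> permutes {..<n}"
    by (rule bij_imp_permutes) (simp add: \<rho>_def)
  define \<pi> where "\<pi> = inv_into UNIV \<rho>"
  have \<pi>: "\<pi> permutes {..<n}"
    unfolding \<pi>_def by (rule permutes_inv[OF \<rho>])
  have rank_\<pi>: "rank_among t n (\<pi> a) = a" if "a < n" for a
    using permutes_inverses(1)[OF \<rho>, of a] permutes_in_image[OF \<pi>, of a] that
    unfolding \<pi>_def \<rho>_def by auto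
  have "strict_antimono_on {..<n} (t \<circ> \<pi>)"
  proof (rule monotone_onI)
    fix a b assume ab: "a \<in> {..<n}" "b \<in> {..<n}" "a < b"
    have \<pi>ab: "\<pi> a < n" "\<pi> b < n"
      using permutes_in_image[OF \<pi>] ab by auto
    have "\<not> t (\<pi> a) < t (\<pi> b)"
      using rank_among_antimono[OF \<pi>ab, of t] rank_\<pi> ab by auto
    moreover have "t (\<pi> a) \<noteq> t (\<pi> b)"
      using inj \<pi>ab ab permutes_inj[OF \<pi>] by (auto dest: inj_onD injD)
    ultimately show "(t \<circ> \<pi>) b < (t \<circ> \<pi>) a"
      by simp
  qed
  with \<pi> show ?thesis ..
qed

lemma sorting_permutation_unique:
  fixes t :: "nat \<Rightarrow> real"
  assumes \<sigma>1: "\<sigma>1 permutes {..<n}" and \<sigma>2: "\<sigma>2 permutes {..<n}"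
    and dec1: "strict_antimono_on {..<n} (t \<circ> \<sigma>1)" and dec2: "strict_antimono_on {..<n} (t \<circ> \<sigma>2)"
  shows "\<sigma>1 = \<sigma>2"
proof
  fix k show "\<sigma>1 k = \<sigma>2 k"
  proof (cases "k < n")
    case True
    have "inj_on (t \<circ> \<sigma>1) {..<n}"
      using dec1 strict_antimono_iff_antimono by blast
    then have "inj_on t {..<n}"
      using permutes_image[OF \<sigma>1] by (metis inj_on_imageI)
    moreover have "rank_among t n (\<sigma>1 k) = rank_among t n (\<sigma>2 k)"
      using rank_among_sorted[OF \<sigma>1 dec1 True] rank_among_sorted[OF \<sigma>2 dec2 True] by simp
    ultimately show ?thesis
      using inj_on_rank_among permutes_in_image[OF \<sigma>1] permutes_in_image[OF \<sigma>2] True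
      by (metis inj_onD lessThan_iff)
  qed (simp add: permutes_not_in[OF \<sigma>1] permutes_not_in[OF \<sigma>2])
qed

lemma phi_chain_permute_imp_strict_antimono:
  assumes ge: "\<And>i. i < n \<Longrightarrow> t i \<le> \<phi> (t i)"
    and \<sigma>: "\<sigma> permutes {..<n}" and chain: "phi_chain \<phi> n (t \<circ> \<sigma>)"
  shows "strict_antimono_on {..<n} (t \<circ> \<sigma>)"
  by (rule phi_chain_imp_strict_antimono[OF _ chain]) (use ge permutes_in_image[OF \<sigma>] in auto)

lemma phi_chain_permute_imp_inj_on:
  assumes ge: "\<And>i. i < n \<Longrightarrow> t i \<le> \<phi> (t i)"
    and \<sigma>: "\<sigma> permutes {..<n}" and chain: "phi_chain \<phi> n (t \<circ> \<sigma>)"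
  shows "inj_on t {..<n}"
proof -
  have "inj_on (t \<circ> \<sigma>) {..<n}"
    using phi_chain_permute_imp_strict_antimono[OF ge \<sigma> chain] strict_antimono_iff_antimono by blast
  then show ?thesis
    using permutes_image[OF \<sigma>] by (metis inj_on_imageI)
qed

lemma det_comparison_matrix:
  assumes ge: "\<And>i. i < n \<Longrightarrow> t i \<le> \<phi> (t i)"
  shows "det_n n (comparison_matrix \<phi> t) = of_bool (\<exists>\<sigma>. \<sigma> permutes {..<n} \<and> phi_chain \<phi> n (t \<circ> \<sigma>))"
proof (cases "inj_on t {..<n}")
  case True
  obtain \<pi> where \<pi>: "\<pi> permutes {..<n}" and dec: "strict_antimono_on {..<n} (t \<circ> \<pi>)"
    using sorting_permutation_exists[OF True] .
  have "det_n n (comparison_matrix \<phi> t) = det_n n (\<lambda>i j. comparison_matrix \<phi> t (\<pi> i) (\<pi> j))"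
    by (rule det_n_permute[OF \<pi>, symmetric])
  also have "\<dots> = det_n n (comparison_matrix \<phi> (t \<circ> \<pi>))"
    by (rule arg_cong[where f = "det_n n"]) (simp add: fun_eq_iff comparison_matrix_def)
  also have "\<dots> = of_bool (phi_chain \<phi> n (t \<circ> \<pi>))"
    by (rule det_comparison_matrix_decreasing[OF dec]) (use ge permutes_in_image[OF \<pi>] in auto)
  also have "phi_chain \<phi> n (t \<circ> \<pi>) \<longleftrightarrow> (\<exists>\<sigma>. \<sigma> permutes {..<n} \<and> phi_chain \<phi> n (t \<circ> \<sigma>))"
  proof
    assume "\<exists>\<sigma>. \<sigma> permutes {..<n} \<and> phi_chain \<phi> n (t \<circ> \<sigma>)"
    then obtain \<sigma> where \<sigma>: "\<sigma> permutes {..<n}" and chain: "phi_chain \<phi> n (t \<circ> \<sigma>)"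
      by blast
    have "\<sigma> = \<pi>"
      using sorting_permutation_unique[OF \<sigma> \<pi> _ dec]
        phi_chain_permute_imp_strict_antimono[OF ge \<sigma> chain] by simp
    with chain show "phi_chain \<phi> n (t \<circ> \<pi>)"
      by simp
  qed (use \<pi> in blast)
  finally show ?thesis .
next
  case False
  then obtain i j where ij: "i < n" "j < n" "i \<noteq> j" "t i = t j"
    unfolding inj_on_def by auto
  have "det_n n (comparison_matrix \<phi> t) = 0"
    unfolding det_n_eq_det_mat
    by (rule det_identical_rows[OF _ ij(3) ij(1) ij(2)]) (use ij in \<open>auto simp: comparison_matrix_def\<close>)
  moreover have "\<not> phi_chain \<phi> n (t \<circ> \<sigma>)" if "\<sigma> permutes {..<n}" for \<sigma>
    using phi_chain_permute_imp_inj_on[where t = t, OF ge that] False by blast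
  ultimately show ?thesis
    by auto
qed

lemma phi_chain_permutation_unique:
  assumes ge: "\<And>i. i < n \<Longrightarrow> t i \<le> \<phi> (t i)"
    and \<sigma>1: "\<sigma>1 permutes {..<n}" and \<sigma>2: "\<sigma>2 permutes {..<n}"
    and chain1: "phi_chain \<phi> n (t \<circ> \<sigma>1)" and chain2: "phi_chain \<phi> n (t \<circ> \<sigma>2)"
  shows "\<sigma>1 = \<sigma>2"
proof (rule sorting_permutation_unique[OF \<sigma>1 \<sigma>2])
  show "strict_antimono_on {..<n} (t \<circ> \<sigma>1)"
    by (rule phi_chain_permute_imp_strict_antimono[OF _ \<sigma>1 chain1]) (rule ge)
  show "strict_antimono_on {..<n} (t \<circ> \<sigma>2)"
    by (rule phi_chain_permute_imp_strict_antimono[OF _ \<sigma>2 chain2]) (rule ge)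
qed

lemma sum_phi_chain_permutations:
  assumes ge: "\<And>i. i < n \<Longrightarrow> t i \<le> \<phi> (t i)"
  shows "(\<Sum>\<sigma> | \<sigma> permutes {..<n}. of_bool (phi_chain \<phi> n (t \<circ> \<sigma>))) =
    (of_bool (\<exists>\<sigma>. \<sigma> permutes {..<n} \<and> phi_chain \<phi> n (t \<circ> \<sigma>)) :: 'a::semiring_1)"
proof (cases "\<exists>\<sigma>. \<sigma> permutes {..<n} \<and> phi_chain \<phi> n (t \<circ> \<sigma>)")
  case True
  then obtain \<sigma>0 where \<sigma>0: "\<sigma>0 permutes {..<n}" "phi_chain \<phi> n (t \<circ> \<sigma>0)"
    by blast
  have "(\<Sum>\<sigma> | \<sigma> permutes {..<n}. of_bool (phi_chain \<phi> n (t \<circ> \<sigma>)) :: 'a) =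
      (\<Sum>\<sigma> | \<sigma> permutes {..<n}. if \<sigma> = \<sigma>0 then 1 else 0)"
  proof (rule sum.cong[OF refl])
    fix \<sigma> assume "\<sigma> \<in> {\<sigma>. \<sigma> permutes {..<n}}"
    then have "phi_chain \<phi> n (t \<circ> \<sigma>) \<longleftrightarrow> \<sigma> = \<sigma>0"
      using phi_chain_permutation_unique[where t = t, OF ge _ \<sigma>0(1) _ \<sigma>0(2), of \<sigma>] \<sigma>0 by auto
    then show "of_bool (phi_chain \<phi> n (t \<circ> \<sigma>)) = (if \<sigma> = \<sigma>0 then 1 else (0::'a))"
      by simp
  qed
  also have "\<dots> = 1"
    using \<sigma>0(1) by (simp add: finite_permutations)
  finally show ?thesis
    using True by simp
qed simp

definition chain_weight ::
  "(real \<Rightarrow> real) \<Rightarrow> (real \<Rightarrow> complex) \<Rightarrow> (real \<Rightarrow> complex) \<Rightarrow> nat \<Rightarrow> (nat \<Rightarrow> real) \<Rightarrow> complex" where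
  "chain_weight \<phi> q w n u = (\<Prod>i<n. q (u i) * w (u i)) * of_bool (phi_chain \<phi> n u)"

lemma chain_weight_permute:
  assumes "\<sigma> permutes {..<n}"
  shows "chain_weight \<phi> q w n (t \<circ> \<sigma>) =
    (\<Prod>i<n. q (t i) * w (t i)) * of_bool (phi_chain \<phi> n (t \<circ> \<sigma>))"
  using prod.permute[OF assms, of "\<lambda>i. q (t i) * w (t i)"] by (simp add: chain_weight_def comp_def)

lemma det_V_kernel_eq_sum_chain_weight:
  assumes ge: "\<And>i. i < n \<Longrightarrow> t i \<le> \<phi> (t i)"
  shows "det_n n (\<lambda>i j. V_kernel \<phi> q w (t i) (t j)) =
    (\<Sum>\<sigma> | \<sigma> permutes {..<n}. chain_weight \<phi> q w n (t \<circ> \<sigma>))"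
proof -
  have "(\<Sum>\<sigma> | \<sigma> permutes {..<n}. chain_weight \<phi> q w n (t \<circ> \<sigma>)) =
      (\<Prod>i<n. q (t i) * w (t i)) * (\<Sum>\<sigma> | \<sigma> permutes {..<n}. of_bool (phi_chain \<phi> n (t \<circ> \<sigma>)))"
    by (simp add: chain_weight_permute sum_distrib_left)
  also have "\<dots> = (\<Prod>i<n. q (t i) * w (t i)) * det_n n (comparison_matrix \<phi> t)"
    by (simp add: sum_phi_chain_permutations[where t = t, OF ge] det_comparison_matrix[where t = t, OF ge])
  finally show ?thesis
    by (simp add: V_kernel_eq_comparison_matrix det_n_scale_rows_cols)
qed

lemma sum_norm_chain_weight_le:
  assumes ge: "\<And>i. i < n \<Longrightarrow> t i \<le> \<phi> (t i)"
  shows "(\<Sum>\<sigma> | \<sigma> permutes {..<n}. norm (chain_weight \<phi> q w n (t \<circ> \<sigma>))) \<le>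
    (\<Prod>i<n. norm (q (t i) * w (t i)))"
proof -
  have "(\<Sum>\<sigma> | \<sigma> permutes {..<n}. norm (chain_weight \<phi> q w n (t \<circ> \<sigma>))) =
      (\<Prod>i<n. norm (q (t i) * w (t i))) * (\<Sum>\<sigma> | \<sigma> permutes {..<n}. of_bool (phi_chain \<phi> n (t \<circ> \<sigma>)))"
    unfolding sum_distrib_left
  proof (rule sum.cong[OF refl])
    fix \<sigma> assume "\<sigma> \<in> {\<sigma>. \<sigma> permutes {..<n}}"
    then show "norm (chain_weight \<phi> q w n (t \<circ> \<sigma>)) =
        (\<Prod>i<n. norm (q (t i) * w (t i))) * of_bool (phi_chain \<phi> n (t \<circ> \<sigma>))"
      by (simp add: chain_weight_permute norm_mult prod_norm[symmetric])
  qed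
  also have "\<dots> \<le> (\<Prod>i<n. norm (q (t i) * w (t i)))"
    by (simp add: sum_phi_chain_permutations[where t = t, OF ge] prod_nonneg)
  finally show ?thesis .
qed

text \<open>Peeling off the smallest point \<open>u n\<close> of a chain: this is the recursion of \<^const>\<open>iter_int\<close>.\<close>

fun chain_weight_above ::
  "(real \<Rightarrow> real) \<Rightarrow> (real \<Rightarrow> complex) \<Rightarrow> (real \<Rightarrow> complex) \<Rightarrow> nat \<Rightarrow> real \<Rightarrow> (nat \<Rightarrow> real) \<Rightarrow> complex" where
  "chain_weight_above \<phi> q w 0 s u = 1"
| "chain_weight_above \<phi> q w (Suc n) s u =
     of_bool (s < u n) * (q (u n) * w (u n)) * chain_weight_above \<phi> q w n (\<phi> (u n)) u"

lemma chain_weight_above_eq: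
  "chain_weight_above \<phi> q w n s u = chain_weight \<phi> q w n u * of_bool (n = 0 \<or> s < u (n - 1))"
proof (induction n arbitrary: s)
  case 0
  then show ?case
    by (simp add: chain_weight_def phi_chain_def)
next
  case (Suc n)
  then show ?case
    by (auto simp: chain_weight_def phi_chain_Suc)
qed

lemma chain_weight_Suc:
  "chain_weight \<phi> q w (Suc n) u = q (u n) * w (u n) * chain_weight_above \<phi> q w n (\<phi> (u n)) u"
  by (auto simp: chain_weight_above_eq chain_weight_def phi_chain_Suc)

lemma chain_weight_cong:
  "(\<And>i. i < n \<Longrightarrow> u i = u' i) \<Longrightarrow> chain_weight \<phi> q w n u = chain_weight \<phi> q w n u'"
  unfolding chain_weight_def phi_chain_def by (auto intro!: prod.cong)

lemma chain_weight_above_cong: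
  "(\<And>i. i < n \<Longrightarrow> u i = u' i) \<Longrightarrow> chain_weight_above \<phi> q w n s u = chain_weight_above \<phi> q w n s u'"
  unfolding chain_weight_above_eq using chain_weight_cong[of n u u'] by (cases n) auto

lemma norm_chain_weight_le: "norm (chain_weight \<phi> q w n u) \<le> (\<Prod>i<n. norm (q (u i) * w (u i)))"
  by (simp add: chain_weight_def prod_norm prod_nonneg)

lemma norm_chain_weight_above_le:
  "norm (chain_weight_above \<phi> q w n s u) \<le> (\<Prod>i<n. norm (q (u i) * w (u i)))"
  using norm_chain_weight_le[of \<phi> q w n u] by (auto simp: chain_weight_above_eq norm_mult intro: prod_nonneg)

section \<open>Integrals over the unit cube\<close>

abbreviation lebesgue_01 :: "real measure" where
  "lebesgue_01 \<equiv> lebesgue_on {0..1}"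

abbreviation unit_cube :: "nat \<Rightarrow> (nat \<Rightarrow> real) measure" where
  "unit_cube n \<equiv> Pi\<^sub>M {..<n} (\<lambda>_. lebesgue_01)"

lemma prob_space_lebesgue_01: "prob_space lebesgue_01"
  by (rule prob_spaceI) (simp add: emeasure_restrict_space)

lemma prob_space_unit_cube: "prob_space (unit_cube n)"
  by (rule prob_space_PiM) (simp add: prob_space_lebesgue_01)

lemma product_sigma_finite_lebesgue_01: "product_sigma_finite (\<lambda>_::nat. lebesgue_01)"
proof -
  interpret prob_space lebesgue_01
    by (rule prob_space_lebesgue_01)
  show ?thesis
    by unfold_locales
qed

lemma borel_measurable_lebesgue_01_id: "(\<lambda>x. x) \<in> borel_measurable lebesgue_01"
  by (rule continuous_imp_measurable_on_sets_lebesgue) (auto intro: continuous_on_id)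

lemma measurable_unit_cube_component: "i < n \<Longrightarrow> (\<lambda>t. t i) \<in> unit_cube n \<rightarrow>\<^sub>M lebesgue_01"
  using measurable_component_singleton[of i "{..<n}" "\<lambda>_. lebesgue_01"] by simp

lemma space_unit_cube_D: "t \<in> space (unit_cube n) \<Longrightarrow> i < n \<Longrightarrow> t i \<in> {0..1}"
  by (auto simp: space_PiM PiE_iff)

lemma borel_measurable_of_bool_less:
  fixes f g :: "'a \<Rightarrow> real"
  assumes "f \<in> borel_measurable N" "g \<in> borel_measurable N"
  shows "(\<lambda>x. of_bool (f x < g x) :: complex) \<in> borel_measurable N"
  unfolding of_bool_def by (rule measurable_If) (use borel_measurable_less[OF assms] in auto)

lemma measurable_unit_cube_permute:
  assumes \<sigma>: "\<sigma> permutes {..<n}"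
  shows "(\<lambda>t. \<lambda>i\<in>{..<n}. t (\<sigma> i)) \<in> unit_cube n \<rightarrow>\<^sub>M unit_cube n"
  by (rule measurable_restrict) (use measurable_unit_cube_component permutes_in_image[OF \<sigma>] in auto)

lemma distr_unit_cube_permute:
  assumes \<sigma>: "\<sigma> permutes {..<n}"
  shows "distr (unit_cube n) (unit_cube n) (\<lambda>t. \<lambda>i\<in>{..<n}. t (\<sigma> i)) = unit_cube n"
  using distr_PiM_reindex[of "{..<n}" "\<lambda>_. lebesgue_01" \<sigma> "{..<n}"] prob_space_lebesgue_01
    permutes_inj_on[OF \<sigma>] permutes_in_image[OF \<sigma>] by auto

lemma
  fixes f :: "(nat \<Rightarrow> real) \<Rightarrow> 'b::{banach, second_countable_topology}"
  assumes \<sigma>: "\<sigma> permutes {..<n}" and f: "f \<in> borel_measurable (unit_cube n)"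
  shows integral_unit_cube_permute:
      "(\<integral>t. f (\<lambda>i\<in>{..<n}. t (\<sigma> i)) \<partial>unit_cube n) = integral\<^sup>L (unit_cube n) f"
    and integrable_unit_cube_permute:
      "integrable (unit_cube n) (\<lambda>t. f (\<lambda>i\<in>{..<n}. t (\<sigma> i))) \<longleftrightarrow> integrable (unit_cube n) f"
  using integral_distr[OF measurable_unit_cube_permute[OF \<sigma>] f]
    integrable_distr_eq[OF measurable_unit_cube_permute[OF \<sigma>] f]
  by (simp_all add: distr_unit_cube_permute[OF \<sigma>])

lemma
  fixes f :: "(nat \<Rightarrow> real) \<Rightarrow> 'b::{banach, second_countable_topology}"
  assumes f: "integrable (unit_cube n) f"
  shows integrable_sum_permutations_unit_cube:
      "integrable (unit_cube n) (\<lambda>t. \<Sum>\<sigma> | \<sigma> permutes {..<n}. f (\<lambda>i\<in>{..<n}. t (\<sigma> i)))"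
    and integral_sum_permutations_unit_cube:
      "(\<integral>t. (\<Sum>\<sigma> | \<sigma> permutes {..<n}. f (\<lambda>i\<in>{..<n}. t (\<sigma> i))) \<partial>unit_cube n) =
        fact n *\<^sub>R integral\<^sup>L (unit_cube n) f"
proof -
  have int: "integrable (unit_cube n) (\<lambda>t. f (\<lambda>i\<in>{..<n}. t (\<sigma> i)))" if "\<sigma> permutes {..<n}" for \<sigma>
    using integrable_unit_cube_permute[OF that borel_measurable_integrable[OF f]] f by simp
  then show "integrable (unit_cube n) (\<lambda>t. \<Sum>\<sigma> | \<sigma> permutes {..<n}. f (\<lambda>i\<in>{..<n}. t (\<sigma> i)))"
    by auto
  have "(\<integral>t. (\<Sum>\<sigma> | \<sigma> permutes {..<n}. f (\<lambda>i\<in>{..<n}. t (\<sigma> i))) \<partial>unit_cube n) =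
      (\<Sum>\<sigma> | \<sigma> permutes {..<n}. integral\<^sup>L (unit_cube n) f)"
    using int f by (simp add: integral_unit_cube_permute)
  also have "\<dots> = fact n *\<^sub>R integral\<^sup>L (unit_cube n) f"
    using card_permutations[of "{..<n}" n] by (simp add: sum_constant_scaleR)
  finally show "(\<integral>t. (\<Sum>\<sigma> | \<sigma> permutes {..<n}. f (\<lambda>i\<in>{..<n}. t (\<sigma> i))) \<partial>unit_cube n) =
      fact n *\<^sub>R integral\<^sup>L (unit_cube n) f" .
qed

lemma integral_unit_cube_Suc:
  fixes f :: "real \<Rightarrow> (nat \<Rightarrow> real) \<Rightarrow> 'b::{banach, second_countable_topology}"
  assumes int: "integrable (unit_cube (Suc n)) (\<lambda>t. f (t n) t)"
    and local: "\<And>x t t'. (\<And>i. i < n \<Longrightarrow> t i = t' i) \<Longrightarrow> f x t = f x t'"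
    and meas: "(\<lambda>x. \<integral>y. f x y \<partial>unit_cube n) \<in> borel_measurable lebesgue_01"
  shows "(\<integral>t. f (t n) t \<partial>unit_cube (Suc n)) = (\<integral>x. (\<integral>y. f x y \<partial>unit_cube n) \<partial>lebesgue_01)"
proof -
  interpret product_sigma_finite "\<lambda>_::nat. lebesgue_01"
    by (rule product_sigma_finite_lebesgue_01)
  have split: "{..<Suc n} = {n} \<union> {..<n}"
    by auto
  have "(\<integral>t. f (t n) t \<partial>unit_cube (Suc n)) =
      (\<integral>x. (\<integral>y. f (merge {n} {..<n} (x, y) n) (merge {n} {..<n} (x, y)) \<partial>unit_cube n)
        \<partial>Pi\<^sub>M {n} (\<lambda>_. lebesgue_01))"
    using product_integral_fold[of "{n}" "{..<n}" "\<lambda>t. f (t n) t"] int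
    unfolding split by simp
  also have "\<dots> = (\<integral>x. (\<integral>y. f (x n) y \<partial>unit_cube n) \<partial>Pi\<^sub>M {n} (\<lambda>_. lebesgue_01))"
    by (intro Bochner_Integration.integral_cong refl) (auto simp: merge_def intro!: local)
  also have "\<dots> = (\<integral>x. (\<integral>y. f x y \<partial>unit_cube n) \<partial>lebesgue_01)"
    by (rule product_integral_singleton[OF meas])
  finally show ?thesis .
qed

lemma integral_lebesgue_01_of_bool_less:
  fixes h :: "real \<Rightarrow> complex"
  assumes s: "s \<in> {0..1}" and h: "h \<in> borel_measurable lebesgue_01"
  shows "(\<integral>a. of_bool (s < a) * h a \<partial>lebesgue_01) = (LINT a:{s..1}|lebesgue. h a)"
proof -
  have sets: "{0..1::real} \<inter> space lebesgue \<in> sets lebesgue"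
    by simp
  have indicator_meas: "(\<lambda>a. indicator {s..1} a *\<^sub>R h a) \<in> borel_measurable lebesgue_01"
  proof -
    have "(\<lambda>a. (1 - of_bool (a < s)) * h a) \<in> borel_measurable lebesgue_01"
      by (intro borel_measurable_times borel_measurable_diff h borel_measurable_of_bool_less
          borel_measurable_lebesgue_01_id) auto
    moreover have "(1 - of_bool (a < s)) * h a = indicator {s..1} a *\<^sub>R h a" if "a \<in> space lebesgue_01" for a
      using that by (auto simp: indicator_def)
    ultimately show ?thesis
      using measurable_cong by (metis (no_types, lifting))
  qed
  have of_bool_meas: "(\<lambda>a. of_bool (s < a) * h a) \<in> borel_measurable lebesgue_01"
    by (intro borel_measurable_times h borel_measurable_of_bool_less borel_measurable_lebesgue_01_id)
      auto
  have "(\<integral>a. of_bool (s < a) * h a \<partial>lebesgue_01) =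
      (\<integral>a. indicator {0..1} a *\<^sub>R (of_bool (s < a) * h a) \<partial>lebesgue)"
    by (rule integral_restrict_space[OF sets])
  also have "\<dots> = (\<integral>a. indicator {0..1} a *\<^sub>R (indicator {s..1} a *\<^sub>R h a) \<partial>lebesgue)"
  proof (rule integral_cong_AE)
    show "(\<lambda>a. indicator {0..1} a *\<^sub>R (of_bool (s < a) * h a)) \<in> borel_measurable lebesgue"
      by (rule borel_measurable_restrict_space_iff[OF sets, THEN iffD1, OF of_bool_meas])
    show "(\<lambda>a. indicator {0..1} a *\<^sub>R (indicator {s..1} a *\<^sub>R h a)) \<in> borel_measurable lebesgue"
      by (rule borel_measurable_restrict_space_iff[OF sets, THEN iffD1, OF indicator_meas])
    have "AE a in lebesgue. a \<noteq> s"
      by (rule AE_completion[OF AE_lborel_singleton])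
    then show "AE a in lebesgue. indicator {0..1} a *\<^sub>R (of_bool (s < a) * h a) =
        indicator {0..1} a *\<^sub>R (indicator {s..1} a *\<^sub>R h a)"
      by eventually_elim (use s in \<open>auto simp: indicator_def\<close>)
  qed
  also have "\<dots> = (LINT a:{s..1}|lebesgue. h a)"
    unfolding set_lebesgue_integral_def
    by (rule Bochner_Integration.integral_cong[OF refl]) (use s in \<open>auto simp: indicator_def\<close>)
  finally show ?thesis .
qed

lemma borel_measurable_phi_chain:
  assumes "\<And>i. i < n \<Longrightarrow> (\<lambda>x. T x i) \<in> borel_measurable N"
    and "\<And>i. i < n \<Longrightarrow> (\<lambda>x. \<phi> (T x i)) \<in> borel_measurable N"
  shows "(\<lambda>x. of_bool (phi_chain \<phi> n (T x)) :: complex) \<in> borel_measurable N"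
  unfolding of_bool_phi_chain_eq_prod
proof (rule borel_measurable_prod)
  fix k
  show "(\<lambda>x. of_bool (Suc k < n \<longrightarrow> \<phi> (T x (Suc k)) < T x k) :: complex) \<in> borel_measurable N"
  proof (cases "Suc k < n")
    case True
    then have "(\<lambda>x. of_bool (\<phi> (T x (Suc k)) < T x k) :: complex) \<in> borel_measurable N"
      by (intro borel_measurable_of_bool_less assms) auto
    with True show ?thesis
      by simp
  qed simp
qed

section \<open>The chain integrals\<close>

locale volterra_kernel =
  fixes \<phi> :: "real \<Rightarrow> real" and q w :: "real \<Rightarrow> complex"
  assumes phi_measurable: "\<phi> \<in> borel_measurable lebesgue_01"
    and phi_range: "\<And>x. x \<in> {0..1} \<Longrightarrow> \<phi> x \<in> {0..1}"
    and phi_ge: "\<And>x. x \<in> {0..1} \<Longrightarrow> x \<le> \<phi> x"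
    and qw_integrable: "integrable lebesgue_01 (\<lambda>x. q x * w x)"
begin

lemma qw_measurable: "(\<lambda>x. q x * w x) \<in> borel_measurable lebesgue_01"
  using qw_integrable by (rule borel_measurable_integrable)

lemma measurable_chain_weight:
  assumes T: "\<And>i. i < n \<Longrightarrow> (\<lambda>x. T x i) \<in> N \<rightarrow>\<^sub>M lebesgue_01"
  shows "(\<lambda>x. chain_weight \<phi> q w n (T x)) \<in> borel_measurable N"
proof -
  have comp: "(\<lambda>x. f (T x i)) \<in> borel_measurable N" if "i < n" "f \<in> borel_measurable lebesgue_01" for f i
    using measurable_compose[OF T[OF that(1)] that(2)] .
  have "(\<lambda>x. of_bool (phi_chain \<phi> n (T x)) :: complex) \<in> borel_measurable N"
    by (intro borel_measurable_phi_chain comp borel_measurable_lebesgue_01_id phi_measurable)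
  moreover have "(\<lambda>x. q (T x i) * w (T x i)) \<in> borel_measurable N" if "i < n" for i
    using comp[OF that qw_measurable] .
  ultimately show ?thesis
    unfolding chain_weight_def by (intro borel_measurable_times[OF borel_measurable_prod]) auto
qed

lemma measurable_chain_weight_above:
  assumes T: "\<And>i. i < n \<Longrightarrow> (\<lambda>x. T x i) \<in> N \<rightarrow>\<^sub>M lebesgue_01"
    and S: "S \<in> borel_measurable N"
  shows "(\<lambda>x. chain_weight_above \<phi> q w n (S x) (T x)) \<in> borel_measurable N"
proof (cases n)
  case (Suc m)
  have "(\<lambda>x. T x m) \<in> borel_measurable N"
    using measurable_compose[OF T borel_measurable_lebesgue_01_id, of m] Suc by simp
  with S show ?thesis
    unfolding chain_weight_above_eq
    by (intro borel_measurable_times measurable_chain_weight T borel_measurable_of_bool_less)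
      (auto simp: Suc)
qed simp

lemma integrable_prod_norm_qw: "integrable (unit_cube n) (\<lambda>t. \<Prod>i<n. norm (q (t i) * w (t i)))"
proof -
  interpret product_sigma_finite "\<lambda>_::nat. lebesgue_01"
    by (rule product_sigma_finite_lebesgue_01)
  show ?thesis
    by (rule product_integrable_prod) (auto intro: qw_integrable)
qed

lemma integral_prod_norm_qw:
  "(\<integral>t. (\<Prod>i<n. norm (q (t i) * w (t i))) \<partial>unit_cube n) = (\<integral>x. norm (q x * w x) \<partial>lebesgue_01) ^ n"
proof -
  interpret product_sigma_finite "\<lambda>_::nat. lebesgue_01"
    by (rule product_sigma_finite_lebesgue_01)
  show ?thesis
    by (subst product_integral_prod) (auto intro: qw_integrable)
qed

lemma integrable_chain_weight: "integrable (unit_cube n) (chain_weight \<phi> q w n)"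
proof (rule Bochner_Integration.integrable_bound[OF integrable_prod_norm_qw])
  show "chain_weight \<phi> q w n \<in> borel_measurable (unit_cube n)"
    using measurable_chain_weight[of n "\<lambda>t. t"] measurable_unit_cube_component by auto
qed (auto simp: norm_chain_weight_le prod_nonneg)

lemma integrable_chain_weight_above: "integrable (unit_cube n) (chain_weight_above \<phi> q w n s)"
proof (rule Bochner_Integration.integrable_bound[OF integrable_prod_norm_qw])
  show "chain_weight_above \<phi> q w n s \<in> borel_measurable (unit_cube n)"
    using measurable_chain_weight_above[of n "\<lambda>t. t"] measurable_unit_cube_component by auto
qed (auto simp: norm_chain_weight_above_le prod_nonneg)

text \<open>Measurability of \<open>x \<mapsto> iter_int \<phi> q w n (\<phi> x)\<close> comes from the integral representation:
  a parametric integral of a jointly measurable function is measurable.\<close>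

lemma measurable_iter_int_phi:
  assumes IH: "\<And>s. s \<in> {0..1} \<Longrightarrow> (\<integral>u. chain_weight_above \<phi> q w n s u \<partial>unit_cube n) = iter_int \<phi> q w n s"
  shows "(\<lambda>x. iter_int \<phi> q w n (\<phi> x)) \<in> borel_measurable lebesgue_01"
proof -
  interpret prob_space "unit_cube n"
    by (rule prob_space_unit_cube)
  have "(\<lambda>p. chain_weight_above \<phi> q w n (\<phi> (fst p)) (snd p)) \<in> borel_measurable (lebesgue_01 \<Otimes>\<^sub>M unit_cube n)"
    by (intro measurable_chain_weight_above measurable_compose[OF measurable_snd]
        measurable_compose[OF measurable_fst phi_measurable] measurable_unit_cube_component)
  then have "(\<lambda>x. \<integral>u. chain_weight_above \<phi> q w n (\<phi> x) u \<partial>unit_cube n) \<in> borel_measurable lebesgue_01"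
    by (intro borel_measurable_lebesgue_integral) (simp add: case_prod_beta')
  then show ?thesis
    by (rule measurable_cong[THEN iffD1, rotated]) (auto simp: IH[OF phi_range])
qed

lemma integral_chain_weight_step:
  assumes IH: "\<And>s. s \<in> {0..1} \<Longrightarrow> (\<integral>u. chain_weight_above \<phi> q w n s u \<partial>unit_cube n) = iter_int \<phi> q w n s"
    and c: "c \<in> borel_measurable lebesgue_01"
    and int: "integrable (unit_cube (Suc n)) (\<lambda>u. c (u n) * chain_weight_above \<phi> q w n (\<phi> (u n)) u)"
  shows "(\<integral>u. c (u n) * chain_weight_above \<phi> q w n (\<phi> (u n)) u \<partial>unit_cube (Suc n)) =
    (\<integral>x. c x * iter_int \<phi> q w n (\<phi> x) \<partial>lebesgue_01)"
proof -
  have inner: "(\<integral>u. c x * chain_weight_above \<phi> q w n (\<phi> x) u \<partial>unit_cube n) = c x * iter_int \<phi> q w n (\<phi> x)"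
    if "x \<in> space lebesgue_01" for x
  proof -
    have "x \<in> {0..1}"
      using that by simp
    then have "(\<integral>u. chain_weight_above \<phi> q w n (\<phi> x) u \<partial>unit_cube n) = iter_int \<phi> q w n (\<phi> x)"
      by (intro IH phi_range)
    then show ?thesis
      by simp
  qed
  have "(\<lambda>x. c x * iter_int \<phi> q w n (\<phi> x)) \<in> borel_measurable lebesgue_01"
    by (intro borel_measurable_times c measurable_iter_int_phi IH)
  then have "(\<lambda>x. \<integral>u. c x * chain_weight_above \<phi> q w n (\<phi> x) u \<partial>unit_cube n) \<in> borel_measurable lebesgue_01"
    by (rule measurable_cong[THEN iffD2, rotated]) (erule inner)
  then have "(\<integral>u. c (u n) * chain_weight_above \<phi> q w n (\<phi> (u n)) u \<partial>unit_cube (Suc n)) =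
      (\<integral>x. (\<integral>u. c x * chain_weight_above \<phi> q w n (\<phi> x) u \<partial>unit_cube n) \<partial>lebesgue_01)"
    by (intro integral_unit_cube_Suc[where f = "\<lambda>x u. c x * chain_weight_above \<phi> q w n (\<phi> x) u", OF int])
      (auto intro: chain_weight_above_cong)
  also have "\<dots> = (\<integral>x. c x * iter_int \<phi> q w n (\<phi> x) \<partial>lebesgue_01)"
    by (intro Bochner_Integration.integral_cong refl inner)
  finally show ?thesis .
qed

lemma integral_chain_weight_above:
  "s \<in> {0..1} \<Longrightarrow> (\<integral>u. chain_weight_above \<phi> q w n s u \<partial>unit_cube n) = iter_int \<phi> q w n s"
proof (induction n arbitrary: s)
  case 0
  show ?case
    using prob_space_unit_cube[of 0, THEN prob_space.prob_space] by simp
next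
  case (Suc n)
  define c where "c x = of_bool (s < x) * (q x * w x)" for x
  have c: "c \<in> borel_measurable lebesgue_01"
    unfolding c_def
    by (intro borel_measurable_times qw_measurable borel_measurable_of_bool_less
        borel_measurable_lebesgue_01_id) auto
  have weight: "chain_weight_above \<phi> q w (Suc n) s = (\<lambda>u. c (u n) * chain_weight_above \<phi> q w n (\<phi> (u n)) u)"
    by (simp add: c_def fun_eq_iff)
  have "(\<integral>u. chain_weight_above \<phi> q w (Suc n) s u \<partial>unit_cube (Suc n)) =
      (\<integral>x. of_bool (s < x) * (q x * w x * iter_int \<phi> q w n (\<phi> x)) \<partial>lebesgue_01)"
    using integral_chain_weight_step[OF Suc.IH c] integrable_chain_weight_above[of "Suc n" s]
    unfolding weight by (simp add: c_def mult_ac)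
  also have "\<dots> = iter_int \<phi> q w (Suc n) s"
    using measurable_iter_int_phi[OF Suc.IH] Suc.prems
    by (simp add: integral_lebesgue_01_of_bool_less borel_measurable_times qw_measurable)
  finally show ?case .
qed

lemma integral_chain_weight: "(\<integral>u. chain_weight \<phi> q w n u \<partial>unit_cube n) = iter_int \<phi> q w n 0"
proof (cases n)
  case 0
  show ?thesis
    using prob_space_unit_cube[of 0, THEN prob_space.prob_space]
    by (simp add: 0 chain_weight_def phi_chain_def)
next
  case (Suc m)
  have "(\<integral>u. chain_weight \<phi> q w (Suc m) u \<partial>unit_cube (Suc m)) =
      (\<integral>x. q x * w x * iter_int \<phi> q w m (\<phi> x) \<partial>lebesgue_01)"
    using integral_chain_weight_step[OF integral_chain_weight_above qw_measurable]
      integrable_chain_weight[of "Suc m"]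
    by (simp add: chain_weight_Suc[abs_def])
  also have "\<dots> = iter_int \<phi> q w (Suc m) 0"
    by (simp add: integral_restrict_space set_lebesgue_integral_def)
  finally show ?thesis
    using Suc by simp
qed

section \<open>The Fredholm coefficients\<close>

lemma chain_weight_restrict_permute:
  "chain_weight \<phi> q w n (\<lambda>i\<in>{..<n}. t (\<sigma> i)) = chain_weight \<phi> q w n (t \<circ> \<sigma>)"
  by (rule chain_weight_cong) simp

lemma le_phi_unit_cube: "t \<in> space (unit_cube n) \<Longrightarrow> i < n \<Longrightarrow> t i \<le> \<phi> (t i)"
  by (intro phi_ge space_unit_cube_D)

lemma fredholm_coeff_V_kernel: "fredholm_coeff (V_kernel \<phi> q w) n = fact n * iter_int \<phi> q w n 0"
proof -
  have "fredholm_coeff (V_kernel \<phi> q w) n =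
      (\<integral>t. (\<Sum>\<sigma> | \<sigma> permutes {..<n}. chain_weight \<phi> q w n (\<lambda>i\<in>{..<n}. t (\<sigma> i))) \<partial>unit_cube n)"
    unfolding fredholm_coeff_def
    by (intro Bochner_Integration.integral_cong refl)
      (simp add: det_V_kernel_eq_sum_chain_weight le_phi_unit_cube chain_weight_restrict_permute)
  also have "\<dots> = fact n * iter_int \<phi> q w n 0"
    by (simp add: integral_sum_permutations_unit_cube integrable_chain_weight integral_chain_weight
        scaleR_conv_of_real)
  finally show ?thesis .
qed

lemma norm_iter_int_le:
  "norm (iter_int \<phi> q w n 0) \<le> (\<integral>x. norm (q x * w x) \<partial>lebesgue_01) ^ n / fact n"
proof -
  let ?g = "\<lambda>t. norm (chain_weight \<phi> q w n t)"
  have g: "integrable (unit_cube n) ?g"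
    using integrable_chain_weight by (rule integrable_norm)
  have "fact n * norm (iter_int \<phi> q w n 0) \<le> fact n * (\<integral>t. ?g t \<partial>unit_cube n)"
    unfolding integral_chain_weight[symmetric] by (intro mult_left_mono integral_norm_bound) auto
  also have "\<dots> = (\<integral>t. (\<Sum>\<sigma> | \<sigma> permutes {..<n}. ?g (\<lambda>i\<in>{..<n}. t (\<sigma> i))) \<partial>unit_cube n)"
    by (simp add: integral_sum_permutations_unit_cube[OF g])
  also have "\<dots> \<le> (\<integral>t. (\<Prod>i<n. norm (q (t i) * w (t i))) \<partial>unit_cube n)"
    by (intro integral_mono integrable_sum_permutations_unit_cube[OF g] integrable_prod_norm_qw)
      (simp add: chain_weight_restrict_permute sum_norm_chain_weight_le le_phi_unit_cube)
  finally show ?thesis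
    by (simp add: integral_prod_norm_qw field_simps)
qed

lemma sums_fredholm_det_V_kernel:
  "(\<lambda>n. (-1) ^ n * z ^ n * iter_int \<phi> q w n 0) sums fredholm_det (V_kernel \<phi> q w) z"
proof -
  define C where "C = (\<integral>x. norm (q x * w x) \<partial>lebesgue_01)"
  have "norm ((-1) ^ n * z ^ n * iter_int \<phi> q w n 0) \<le> inverse (fact n) * (norm z * C) ^ n" for n
  proof -
    have "norm ((-1) ^ n * z ^ n * iter_int \<phi> q w n 0) = norm z ^ n * norm (iter_int \<phi> q w n 0)"
      by (simp add: norm_mult norm_power)
    also have "\<dots> \<le> norm z ^ n * (C ^ n / fact n)"
      unfolding C_def by (intro mult_left_mono norm_iter_int_le) auto
    finally show ?thesis
      by (simp add: power_mult_distrib field_simps)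
  qed
  then have "summable (\<lambda>n. (-1) ^ n * z ^ n * iter_int \<phi> q w n 0)"
    by (intro summable_comparison_test[OF _ summable_exp[of "norm z * C"]]) auto
  moreover have "(-1) ^ n / of_nat (fact n) * fredholm_coeff (V_kernel \<phi> q w) n * z ^ n =
      (-1) ^ n * z ^ n * iter_int \<phi> q w n 0" for n
    by (simp add: fredholm_coeff_V_kernel)
  ultimately show ?thesis
    unfolding fredholm_det_def by (simp add: summable_sums)
qed

end

lemma integrable_mult_square_integrable:
  fixes f g :: "'a \<Rightarrow> complex"
  assumes f: "f \<in> borel_measurable M" "integrable M (\<lambda>x. (norm (f x))\<^sup>2)"
    and g: "g \<in> borel_measurable M" "integrable M (\<lambda>x. (norm (g x))\<^sup>2)"
  shows "integrable M (\<lambda>x. f x * g x)"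
proof (rule Bochner_Integration.integrable_bound[OF Bochner_Integration.integrable_add[OF f(2) g(2)]])
  show "(\<lambda>x. f x * g x) \<in> borel_measurable M"
    using f(1) g(1) by measurable
  have "norm (f x) * norm (g x) \<le> (norm (f x))\<^sup>2 + (norm (g x))\<^sup>2" for x
  proof -
    have "2 * (norm (f x) * norm (g x)) \<le> (norm (f x))\<^sup>2 + (norm (g x))\<^sup>2"
      using sum_squares_bound[of "norm (f x)" "norm (g x)"] by (simp add: power2_eq_square mult.assoc)
    moreover have "0 \<le> norm (f x) * norm (g x)"
      by simp
    ultimately show ?thesis
      by linarith
  qed
  then show "AE x in M. norm (f x * g x) \<le> norm ((norm (f x))\<^sup>2 + (norm (g x))\<^sup>2)"
    by (simp add: norm_mult)
qed

lemma le_self_of_mono_on_greater: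
  fixes \<phi> :: "real \<Rightarrow> real"
  assumes mono: "mono_on {0..1} \<phi>"
    and range: "\<phi> ` {0..1} \<subseteq> {0..1}"
    and greater: "\<And>x. 0 < x \<Longrightarrow> x < 1 \<Longrightarrow> \<phi> x > x"
    and x: "x \<in> {0..1}"
  shows "x \<le> \<phi> x"
proof -
  consider "x = 0" | "0 < x" "x < 1" | "x = 1"
    using x by fastforce
  then show ?thesis
  proof cases
    case 3
    show ?thesis
    proof (rule ccontr)
      assume "\<not> x \<le> \<phi> x"
      then have "\<phi> 1 < 1" "0 \<le> \<phi> 1"
        using 3 range by (auto simp: image_subset_iff)
      define y where "y = (\<phi> 1 + 1) / 2"
      have y: "0 < y" "y < 1" "\<phi> 1 < y"
        using \<open>\<phi> 1 < 1\<close> \<open>0 \<le> \<phi> 1\<close> by (auto simp: y_def)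
      then have "\<phi> y \<le> \<phi> 1"
        using mono_onD[OF mono, of y 1] by simp
      with greater[OF y(1,2)] y(3) show False
        by simp
    qed
  qed (use range greater in \<open>auto simp: image_subset_iff less_imp_le\<close>)
qed

theorem theorem5p6:
  fixes \<phi> :: "real \<Rightarrow> real" and q w :: "real \<Rightarrow> complex" and z :: complex
  assumes phi_mono: "mono_on {0..1} \<phi>"
    and phi_cont: "continuous_on {0..1} \<phi>"
    and phi_range: "\<phi> ` {0..1} \<subseteq> {0..1}"
    and phi_gt: "\<And>x. 0 < x \<Longrightarrow> x < 1 \<Longrightarrow> \<phi> x > x"
    and q_meas: "q \<in> borel_measurable (lebesgue_on {0..1})"
    and q_L2: "integrable (lebesgue_on {0..1}) (\<lambda>x. (norm (q x))\<^sup>2)"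
    and w_meas: "w \<in> borel_measurable (lebesgue_on {0..1})"
    and w_L2: "integrable (lebesgue_on {0..1}) (\<lambda>x. (norm (w x))\<^sup>2)"
  shows "(\<lambda>n. (-1) ^ n * z ^ n * iter_int \<phi> q w n 0) sums fredholm_det (V_kernel \<phi> q w) z"
proof -
  interpret volterra_kernel \<phi> q w
  proof
    show "\<phi> \<in> borel_measurable lebesgue_01"
      using phi_cont by (rule continuous_imp_measurable_on_sets_lebesgue) simp
    show "\<phi> x \<in> {0..1}" if "x \<in> {0..1}" for x
      using phi_range that by blast
    show "x \<le> \<phi> x" if "x \<in> {0..1}" for x
      using le_self_of_mono_on_greater[OF phi_mono phi_range phi_gt that] .
    show "integrable lebesgue_01 (\<lambda>x. q x * w x)"
      using integrable_mult_square_integrable[OF q_meas q_L2 w_meas w_L2] .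
  qed
  show ?thesis
    by (rule sums_fredholm_det_V_kernel)
qed

end
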